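(* Let $r,n,p,c$ be integers with $0\le r\le n$ and $0\le p\le n$. Then $F_q(r,n,c,p;k_1,\ldots,k_{n-r})=0$ whenever $k_1\in\{-1,-2,\ldots,-r\}$ or $k_{n-r}\in\{c+1,c+2,\ldots,c+r\}$.
   Context: For integers $0\le r\le n$ and $c$, an $(r,n,c)$-pattern is an array of integers $(a_{i,j})_{1\le i\le r+1,\ i-1\le j\le n+1}$ with $a_{i,i-1}=0$, $a_{i,n+1}=c$, and for all $2\le i\le r+1$, $i-1\le j\le n$: if $a_{i,j}\le a_{i,j+1}$ then $a_{i,j}\le a_{i-1,j}\le a_{i,j+1}$, and if $a_{i,j}>a_{i,j+1}$ then $a_{i,j}>a_{i-1,j}>a_{i,j+1}$. Its norm is $\sum_{i=1}^{r+1}\sum_{j=i}^{n}a_{i,j}$. An inversion is a pair $(a_{i,j},a_{i,j+1})$ with $a_{i,j}>a_{i,j+1}$ and $i\ne1$; $\operatorname{sgn}(a)=(-1)^{\#\text{inversions}}$. $F_q(r,n,c,p;k_1,\ldots,k_{n-r})=q^{-(k_1+\cdots+k_{n-r})}\sum_a\operatorname{sgn}(a)q^{\operatorname{norm}(a)}$, summed over all $(r,n,c)$-patterns with $a_{r+1,r+i}=k_i$ for $1\le i\le n-r$ and exactly $p$ of $a_{1,1},\ldots,a_{1,n}$ odd ($q$ an indeterminate). *)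

theory Defs
  imports "HOL-Computational_Algebra.Formal_Laurent_Series"
begin

text \<open>An (r,n,c)-pattern is represented as a function a :: int \<Rightarrow> int \<Rightarrow> int,
  a i j = a_{i,j}, on the index set 1 \<le> i \<le> r+1, i-1 \<le> j \<le> n+1, and
  (to make the representation unique) equal to 0 outside that index set.\<close>

definition pat_dom :: "int \<Rightarrow> int \<Rightarrow> int \<Rightarrow> int \<Rightarrow> bool" where
  "pat_dom r n i j \<longleftrightarrow> 1 \<le> i \<and> i \<le> r + 1 \<and> i - 1 \<le> j \<and> j \<le> n + 1"

definition is_pattern :: "int \<Rightarrow> int \<Rightarrow> int \<Rightarrow> (int \<Rightarrow> int \<Rightarrow> int) \<Rightarrow> bool" where
  "is_pattern r n c a \<longleftrightarrow>
     (\<forall>i j. \<not> pat_dom r n i j \<longrightarrow> a i j = 0) \<and>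
     (\<forall>i. 1 \<le> i \<and> i \<le> r + 1 \<longrightarrow> a i (i - 1) = 0 \<and> a i (n + 1) = c) \<and>
     (\<forall>i j. 2 \<le> i \<and> i \<le> r + 1 \<and> i - 1 \<le> j \<and> j \<le> n \<longrightarrow>
        (a i j \<le> a i (j + 1) \<longrightarrow> a i j \<le> a (i - 1) j \<and> a (i - 1) j \<le> a i (j + 1)) \<and>
        (a i j > a i (j + 1) \<longrightarrow> a i j > a (i - 1) j \<and> a (i - 1) j > a i (j + 1)))"

definition pat_norm :: "int \<Rightarrow> int \<Rightarrow> (int \<Rightarrow> int \<Rightarrow> int) \<Rightarrow> int" where
  "pat_norm r n a = (\<Sum>i\<in>{1..r+1}. \<Sum>j\<in>{i..n}. a i j)"

definition pat_inversions :: "int \<Rightarrow> int \<Rightarrow> (int \<Rightarrow> int \<Rightarrow> int) \<Rightarrow> (int \<times> int) set" where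
  "pat_inversions r n a =
     {(i, j). 2 \<le> i \<and> i \<le> r + 1 \<and> i - 1 \<le> j \<and> j \<le> n \<and> a i j > a i (j + 1)}"

definition pat_sgn :: "int \<Rightarrow> int \<Rightarrow> (int \<Rightarrow> int \<Rightarrow> int) \<Rightarrow> int" where
  "pat_sgn r n a = (-1) ^ card (pat_inversions r n a)"

definition F_patterns :: "int \<Rightarrow> int \<Rightarrow> int \<Rightarrow> nat \<Rightarrow> (int \<Rightarrow> int) \<Rightarrow> (int \<Rightarrow> int \<Rightarrow> int) set" where
  "F_patterns r n c p k =
     {a. is_pattern r n c a \<and>
         (\<forall>i. 1 \<le> i \<and> i \<le> n - r \<longrightarrow> a (r + 1) (r + i) = k i) \<and>
         card {j\<in>{1..n}. odd (a 1 j)} = p}"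

definition Fq :: "int \<Rightarrow> int \<Rightarrow> int \<Rightarrow> nat \<Rightarrow> (int \<Rightarrow> int) \<Rightarrow> int fls" where
  "Fq r n c p k =
     fls_X_intpow (- (\<Sum>i\<in>{1..n-r}. k i)) *
     (\<Sum>a\<in>F_patterns r n c p k. of_int (pat_sgn r n a) * fls_X_intpow (pat_norm r n a))"

end

theory Submission
  imports Defs
begin

text \<open>No pattern satisfies the hypotheses, so the sum defining F_q is empty.
  If k_1 = a_{r+1,r+1} < 0, walk up the diagonal: as a_{i,i-1} = 0 > a_{i,i}, the interlacing
  condition forces 0 > a_{i-1,i-1} > a_{i,i}, so a negative diagonal entry in row i is at most -i,
  whence k_1 \<le> -(r+1). Symmetrically, a_{i,n+1} = c < a_{i,n} forces c < a_{i-1,n} < a_{i,n},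
  so an entry of column n exceeding c in row i is at least c + i, whence k_{n-r} \<ge> c + r + 1.\<close>

lemma pattern_inversion_interlaces:
  assumes "is_pattern r n c a" "2 \<le> i" "i \<le> r + 1" "i - 1 \<le> j" "j \<le> n"
    and "a i (j + 1) < a i j"
  shows "a i (j + 1) < a (i - 1) j \<and> a (i - 1) j < a i j"
  using assms unfolding is_pattern_def by auto

lemma pattern_boundary:
  assumes "is_pattern r n c a" "1 \<le> i" "i \<le> r + 1"
  shows "a i (i - 1) = 0" "a i (n + 1) = c"
  using assms unfolding is_pattern_def by blast+

lemma pattern_diag_neg_le:
  assumes a: "is_pattern r n c a" and "1 \<le> i" "i \<le> r + 1" "i \<le> n + 1" "a i i < 0"
  shows "a i i \<le> - i"
  using assms(2-)
proof (induction i rule: int_ge_induct)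
  case base
  then show ?case by linarith
next
  case (step i)
  have "a (i + 1) i = 0"
    using pattern_boundary(1)[OF a, of "i + 1"] step by simp
  then have "a (i + 1) (i + 1) < a i i \<and> a i i < 0"
    using pattern_inversion_interlaces[OF a, of "i + 1" i] step by simp
  then show ?case
    using step.IH step.prems by simp
qed

lemma pattern_last_col_gt_ge:
  assumes a: "is_pattern r n c a" and "1 \<le> i" "i \<le> r + 1" "i \<le> n + 1" "c < a i n"
  shows "c + i \<le> a i n"
  using assms(2-)
proof (induction i rule: int_ge_induct)
  case base
  then show ?case by linarith
next
  case (step i)
  have "a (i + 1) (n + 1) = c"
    using pattern_boundary(2)[OF a, of "i + 1"] step by simp
  then have "c < a i n \<and> a i n < a (i + 1) n"
    using pattern_inversion_interlaces[OF a, of "i + 1" n] step by simp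
  then show ?case
    using step.IH step.prems by simp
qed

theorem lemma17:
  fixes r n p c :: int and k :: "int \<Rightarrow> int"
  assumes "0 \<le> r" "r \<le> n" "0 \<le> p" "p \<le> n" "r < n"
    and "k 1 \<in> {-r..-1} \<or> k (n - r) \<in> {c+1..c+r}"
  shows "Fq r n c (nat p) k = 0"
proof -
  have "F_patterns r n c (nat p) k = {}"
  proof (intro equals0I)
    fix a
    assume "a \<in> F_patterns r n c (nat p) k"
    then have a: "is_pattern r n c a"
      and entries: "\<And>i. 1 \<le> i \<Longrightarrow> i \<le> n - r \<Longrightarrow> a (r + 1) (r + i) = k i"
      unfolding F_patterns_def by auto
    have first: "a (r + 1) (r + 1) = k 1"
      using entries[of 1] assms(5) by simp
    have last: "a (r + 1) n = k (n - r)"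
      using entries[of "n - r"] assms(5) by simp
    show False
      using assms(6)
    proof
      assume "k 1 \<in> {-r..-1}"
      then show False
        using pattern_diag_neg_le[OF a, of "r + 1"] first assms by simp
    next
      assume "k (n - r) \<in> {c+1..c+r}"
      then show False
        using pattern_last_col_gt_ge[OF a, of "r + 1"] last assms by simp
    qed
  qed
  then show ?thesis
    unfolding Fq_def by simp
qed

end
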